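(* Let $k$ and $r$ be positive integers such that $r \mid k$ and $k > r$. Then $$S_{\mathfrak{z},2}(k;r) = rk - 2r + 1.$$
   Context: Let $\mathcal{E}$ denote the equation $x_1 + x_2 + \cdots + x_{k-1} = x_k$, whose solutions are taken in positive integers. For positive integers $k, r$ with $r \mid k$, $S_{\mathfrak{z},2}(k;r)$ is defined as the least positive integer $t$ such that for every 2-coloring $\chi : \{1, 2, \ldots, t\} \to \{0,1\}$ there exists a solution $(\hat{x}_1, \ldots, \hat{x}_k)$ of $\mathcal{E}$ with all $\hat{x}_i \in \{1, \ldots, t\}$ satisfying $\sum_{i=1}^k \chi(\hat{x}_i) \equiv 0 \pmod r$. *)

theory Defs
  imports Main
begin

definition is_solution_in :: "nat \<Rightarrow> nat \<Rightarrow> (nat \<Rightarrow> nat) \<Rightarrow> bool" where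
  "is_solution_in k t x \<longleftrightarrow>
     (\<forall>i\<in>{1..k}. x i \<in> {1..t}) \<and> (\<Sum>i=1..k-1. x i) = x k"

definition zs_property :: "nat \<Rightarrow> nat \<Rightarrow> nat \<Rightarrow> bool" where
  "zs_property k r t \<longleftrightarrow>
     (\<forall>\<chi> :: nat \<Rightarrow> nat. (\<forall>n\<in>{1..t}. \<chi> n \<in> {0,1}) \<longrightarrow>
        (\<exists>x. is_solution_in k t x \<and> r dvd (\<Sum>i=1..k. \<chi> (x i))))"

definition S_z2 :: "nat \<Rightarrow> nat \<Rightarrow> nat" where
  "S_z2 k r = (LEAST t. 0 < t \<and> zs_property k r t)"

end

theory Submission
  imports Defs
begin

text \<open>
  Lower bound: color n by 1 exactly when n \<ge> k - 1. In a solution the entry x_k is then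
  colored 1, and each summand of color 1 adds at least k - 2 to x_k beyond the minimum k - 1;
  a color sum divisible by r needs r - 1 such summands, so x_k \<ge> (k - 1) + (k - 2)(r - 1) = rk - 2r + 1.

  Upper bound: since r divides k, swapping the two colors turns the color sum s into k - s,
  so we may assume that 1 has color 0. All witnesses have a left-hand side made of p copies
  of a, q copies of b and ones; a case analysis on the colors of k - 1, t, 2, 3 and of a few
  derived numbers always finds one whose color sum is 0 or r.
\<close>

lemma sum_three_blocks:
  fixes g :: "nat \<Rightarrow> nat"
  assumes "p + q \<le> n"
  shows "(\<Sum>i=1..n. g (if i \<le> p then a else if i \<le> p + q then b else c)) =
           p * g a + q * g b + (n - p - q) * g c"
proof -
  define h where "h i = g (if i \<le> p then a else if i \<le> p + q then b else c)" for i
  obtain l where n: "n = p + q + l" using assms le_Suc_ex by blast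
  have "sum h {1..n} = sum h {1..p} + sum h {p+1..p+q} + sum h {p+q+1..p+q+l}"
    unfolding n using sum.ub_add_nat[of 1 p h "q + l"] sum.ub_add_nat[of "p+1" "p+q" h l]
    by (simp add: add.assoc)
  also have "\<dots> = p * g a + q * g b + l * g c"
    by (simp add: h_def)
  finally show ?thesis unfolding h_def n by simp
qed

definition has_zero_sum_solution :: "nat \<Rightarrow> nat \<Rightarrow> nat \<Rightarrow> (nat \<Rightarrow> nat) \<Rightarrow> bool" where
  "has_zero_sum_solution k r t \<chi> \<longleftrightarrow>
     (\<exists>x. is_solution_in k t x \<and> r dvd (\<Sum>i=1..k. \<chi> (x i)))"

lemma zs_property_iff:
  "zs_property k r t \<longleftrightarrow>
     (\<forall>\<chi>. (\<forall>n\<in>{1..t}. \<chi> n \<in> {0,1}) \<longrightarrow> has_zero_sum_solution k r t \<chi>)"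
  unfolding zs_property_def has_zero_sum_solution_def ..

lemma has_zero_sum_solution_blocks:
  assumes "p + q < k" and "a \<in> {1..t}" and "b \<in> {1..t}" and "X \<in> {1..t}"
    and "X = p * a + q * b + (k - 1 - p - q)"
    and "\<chi> 1 = 0" and "r dvd p * \<chi> a + q * \<chi> b + \<chi> X"
  shows "has_zero_sum_solution k r t \<chi>"
proof -
  define x where "x i = (if i \<le> p then a else if i \<le> p + q then b else if i < k then 1 else X)" for i
  have init: "(\<Sum>i=1..k-1. g (x i)) = p * g a + q * g b + (k - 1 - p - q) * g 1" for g :: "nat \<Rightarrow> nat"
  proof -
    have "(\<Sum>i=1..k-1. g (x i)) = (\<Sum>i=1..k-1. g (if i \<le> p then a else if i \<le> p + q then b else 1))"
      by (intro sum.cong) (auto simp: x_def)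
    then show ?thesis using sum_three_blocks[of p q "k - 1"] assms(1) by simp
  qed
  have "x k = X" using assms(1) by (simp add: x_def)
  then have "is_solution_in k t x"
    using init[of id] assms(1-5) unfolding is_solution_in_def by (auto simp: x_def)
  moreover have "(\<Sum>i=1..k. \<chi> (x i)) = p * \<chi> a + q * \<chi> b + \<chi> X"
  proof -
    obtain k' where "k = Suc k'" using assms(1) by (cases k) auto
    then have "(\<Sum>i=1..k. \<chi> (x i)) = (\<Sum>i=1..k-1. \<chi> (x i)) + \<chi> (x k)" by simp
    then show ?thesis using init[of \<chi>] \<open>x k = X\<close> \<open>\<chi> 1 = 0\<close> by simp
  qed
  ultimately show ?thesis
    using assms(7) unfolding has_zero_sum_solution_def by metis
qed

lemma has_zero_sum_solution_complement:
  assumes "r dvd k" and coloring: "\<forall>n\<in>{1..t}. \<chi> n \<in> {0,1}"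
    and "has_zero_sum_solution k r t (\<lambda>n. 1 - \<chi> n)"
  shows "has_zero_sum_solution k r t \<chi>"
proof -
  obtain x where x: "is_solution_in k t x" and dvd: "r dvd (\<Sum>i=1..k. 1 - \<chi> (x i))"
    using assms(3) unfolding has_zero_sum_solution_def by blast
  have le1: "\<chi> (x i) \<le> 1" if "i \<in> {1..k}" for i
    using x coloring that unfolding is_solution_in_def by fastforce
  then have "(\<Sum>i=1..k. \<chi> (x i)) \<le> k"
    using sum_mono[of "{1..k}" "\<lambda>i. \<chi> (x i)" "\<lambda>_. 1"] by simp
  moreover have "(\<Sum>i=1..k. 1 - \<chi> (x i)) = k - (\<Sum>i=1..k. \<chi> (x i))"
    using sum_subtractf_nat[of "{1..k}" "\<lambda>i. \<chi> (x i)" "\<lambda>_. 1"] le1 by simp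
  ultimately have "r dvd (\<Sum>i=1..k. \<chi> (x i))"
    using dvd \<open>r dvd k\<close> dvd_diff_nat[of r k "k - (\<Sum>i=1..k. \<chi> (x i))"] by simp
  then show ?thesis using x unfolding has_zero_sum_solution_def by blast
qed

lemma has_zero_sum_solution_modulus_2:
  assumes "k = 2 * m" and "2 \<le> m" and "t = 2 * k - 2 * 2 + 1"
    and "\<chi> 1 = 0" and "\<chi> t = 0"
  shows "has_zero_sum_solution k 2 t \<chi>"
proof (rule has_zero_sum_solution_blocks)
  show "t = 2 * m + 0 * 1 + (k - 1 - 2 - 0)" using assms(1-3) by simp
qed (use assms in auto)

lemma has_zero_sum_solution_modulus_ge_3:
  assumes "3 \<le> r" and "k = r * m" and "2 \<le> m" and "t = r * k - 2 * r + 1"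
    and coloring: "\<forall>n\<in>{1..t}. \<chi> n \<in> {0,1}" and "\<chi> 1 = 0" and "\<chi> t = 0"
  shows "has_zero_sum_solution k r t \<chi>"
proof -
  obtain s j where r: "r = s + 3" and m: "m = j + 2"
    using assms(1,3) le_Suc_ex by (metis add.commute)
  have k1: "k - 1 = s*j + 2*s + 3*j + 5" using assms(2) r m by (simp add: algebra_simps)
  have t: "t = s*s*j + 2*s*s + 6*s*j + 10*s + 9*j + 13"
    using assms(2,4) r m by (simp add: algebra_simps)
  \<comment> \<open>v \<equiv> 5 (mod r) makes r divide t - c - (k - 2 - r), so that w below is an integer.\<close>
  define v d where "v = 5 mod r" and "d = 5 div r"
  have "v < r" using r by (simp add: v_def)
  have d1: "d \<le> 1" using div_le_mono2[of 3 r 5] assms(1) by (simp add: d_def)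
  have vd: "r * d + v = 5" by (simp add: v_def d_def)
  define z c w where "z = k - 1 - m" and "c = k + r - 2 + v" and "w = k - 2 - 2 * m + d"
  have in_t: "3 \<in> {1..t}" "2 \<in> {1..t}" "t \<in> {1..t}" using t by auto
  have in_zc: "z \<in> {1..t}" "c \<in> {1..t}" using t k1 r m \<open>v < r\<close> by (auto simp: z_def c_def)
  have in_w: "w \<in> {1..t}"
  proof -
    have "s = 0 \<Longrightarrow> d = 1" using vd \<open>v < r\<close> r by auto
    then have "1 \<le> 2 * s + d" by (cases "s = 0") auto
    then show ?thesis using t k1 r m d1 by (auto simp: w_def)
  qed
  have e_z3: "t = 1 * 3 + r * z + (k - 1 - 1 - r)"
    using k1 t r m by (simp add: z_def algebra_simps)
  have e_z2: "t = 2 * 2 + r * z + (k - 1 - 2 - r)"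
    using k1 t r m by (simp add: z_def algebra_simps)
  have e_c: "c = (r - 1 - v) * 2 + v * 3 + (k - 1 - (r - 1 - v) - v)"
    using k1 r \<open>v < r\<close> by (simp add: c_def diff_mult_distrib)
  have e_w: "t = 1 * c + r * w + (k - 1 - 1 - r)"
  proof -
    have "c = s*j + 3*s + 3*j + 7 + v" "w = s*j + 2*s + j + d" "k - 1 - 1 - r = s*j + s + 3*j + 1"
      using k1 r m by (auto simp: c_def w_def)
    moreover have "s*d + 3*d + v = 5" using vd r by (simp add: algebra_simps)
    ultimately show ?thesis using t r by (simp add: algebra_simps)
  qed
  have short: "1 + r < k" "2 + r < k" "(r - 1 - v) + v < k" using k1 r \<open>v < r\<close> by auto
  have "\<chi> 2 \<in> {0,1}" "\<chi> 3 \<in> {0,1}" "\<chi> c \<in> {0,1}" using coloring in_t in_zc by auto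
  then consider "\<chi> 3 = 0" | "\<chi> 2 = 0" | "\<chi> 2 = 1" "\<chi> 3 = 1" "\<chi> c = 1" | "\<chi> c = 0"
    by auto
  then show ?thesis
  proof cases
    case 1
    then show ?thesis
      using has_zero_sum_solution_blocks[OF short(1) in_t(1) in_zc(1) in_t(3) e_z3] assms(6,7) by simp
  next
    case 2
    then show ?thesis
      using has_zero_sum_solution_blocks[OF short(2) in_t(2) in_zc(1) in_t(3) e_z2] assms(6,7) by simp
  next
    case 3
    then have "p * \<chi> 2 + v * \<chi> 3 + \<chi> c = r" if "p = r - 1 - v" for p
      using that \<open>v < r\<close> by simp
    then show ?thesis
      using has_zero_sum_solution_blocks[OF short(3) in_t(2) in_t(1) in_zc(2) e_c] assms(6) by simp
  next
    case 4
    then show ?thesis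
      using has_zero_sum_solution_blocks[OF short(1) in_zc(2) in_w in_t(3) e_w] assms(6,7) by simp
  qed
qed

lemma has_zero_sum_solution_if_color_of_1_is_0:
  assumes "0 < r" and "k = r * m" and "2 \<le> m" and "t = r * k - 2 * r + 1"
    and coloring: "\<forall>n\<in>{1..t}. \<chi> n \<in> {0,1}" and "\<chi> 1 = 0"
  shows "has_zero_sum_solution k r t \<chi>"
proof -
  obtain s j where r: "r = s + 1" and m: "m = j + 2"
    using assms(1,3) le_Suc_ex by (metis Suc_eq_plus1 Suc_pred add.commute)
  have k1: "k - 1 = s*j + 2*s + j + 1" using assms(2) r m by (simp add: algebra_simps)
  have t: "t = s*s*j + 2*s*s + 2*s*j + 2*s + j + 1"
    using assms(2,4) r m by (simp add: algebra_simps)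
  have in_t: "1 \<in> {1..t}" "k - 1 \<in> {1..t}" "t \<in> {1..t}" using k1 t by auto
  have "\<chi> (k - 1) \<in> {0,1}" "\<chi> t \<in> {0,1}" using coloring in_t by auto
  then consider "\<chi> (k - 1) = 0" | "\<chi> (k - 1) = 1" "\<chi> t = 1" | "\<chi> (k - 1) = 1" "\<chi> t = 0"
    by auto
  then show ?thesis
  proof cases
    case 1
    have "k - 1 = 0 * 1 + 0 * 1 + (k - 1 - 0 - 0)" by simp
    from has_zero_sum_solution_blocks[OF _ in_t(1) in_t(1) in_t(2) this]
    show ?thesis using 1 assms(6) k1 by simp
  next
    case 2
    have "t = (r - 1) * (k - 1) + 0 * 1 + (k - 1 - (r - 1) - 0)"
      using k1 t r by (simp add: algebra_simps)
    from has_zero_sum_solution_blocks[OF _ in_t(2) in_t(1) in_t(3) this]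
    show ?thesis using 2 assms(6) k1 r by simp
  next
    case 3
    have "r \<noteq> 1"
    proof
      assume "r = 1"
      then have "t = k - 1" using k1 t r by simp
      with 3 show False by simp
    qed
    then consider "r = 2" | "3 \<le> r" using assms(1) by linarith
    then show ?thesis
    proof cases
      case 1
      then show ?thesis using has_zero_sum_solution_modulus_2 assms 3 by simp
    next
      case 2
      then show ?thesis using has_zero_sum_solution_modulus_ge_3 assms 3 by simp
    qed
  qed
qed

lemma zs_property_at_bound:
  assumes "0 < r" and "r dvd k" and "r < k"
  shows "zs_property k r (r * k - 2 * r + 1)"
  unfolding zs_property_iff
proof (intro allI impI)
  fix \<chi> :: "nat \<Rightarrow> nat"
  let ?t = "r * k - 2 * r + 1"
  assume coloring: "\<forall>n\<in>{1..?t}. \<chi> n \<in> {0,1}"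
  obtain m where k: "k = r * m" using assms(2) by blast
  moreover have "m \<noteq> 0" "m \<noteq> 1" using k assms(3) by auto
  ultimately have "2 \<le> m" by linarith
  note normalized = has_zero_sum_solution_if_color_of_1_is_0[OF assms(1) k this refl]
  show "has_zero_sum_solution k r ?t \<chi>"
  proof (cases "\<chi> 1 = 0")
    case True
    then show ?thesis using normalized coloring by blast
  next
    case False
    with coloring[rule_format, of 1] have "\<chi> 1 = 1" by auto
    moreover have "\<forall>n\<in>{1..?t}. 1 - \<chi> n \<in> {0,1}" using coloring by auto
    ultimately have "has_zero_sum_solution k r ?t (\<lambda>n. 1 - \<chi> n)"
      using normalized by simp
    then show ?thesis using has_zero_sum_solution_complement assms(2) coloring by blast
  qed
qed

lemma threshold_coloring_forces_bound:
  assumes "0 < r" and "2 \<le> k" and "has_zero_sum_solution k r t (\<lambda>n. if k - 1 \<le> n then 1 else 0)"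
  shows "r * k - 2 * r + 1 \<le> t"
proof -
  define \<chi> :: "nat \<Rightarrow> nat" where "\<chi> n = (if k - 1 \<le> n then 1 else 0)" for n
  obtain x where x: "is_solution_in k t x" and dvd: "r dvd (\<Sum>i=1..k. \<chi> (x i))"
    using assms(3) unfolding has_zero_sum_solution_def \<chi>_def by blast
  have range: "\<forall>i\<in>{1..k}. x i \<in> {1..t}" and last: "(\<Sum>i=1..k-1. x i) = x k"
    using x unfolding is_solution_in_def by auto
  define J where "J = (\<Sum>i=1..k-1. \<chi> (x i))"
  have "(k - 1) + (k - 2) * J = (\<Sum>i=1..k-1. 1) + (\<Sum>i=1..k-1. (k - 2) * \<chi> (x i))"
    by (simp add: J_def sum_distrib_left)
  also have "\<dots> = (\<Sum>i=1..k-1. 1 + (k - 2) * \<chi> (x i))"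
    by (rule sum.distrib[symmetric])
  also have "\<dots> \<le> (\<Sum>i=1..k-1. x i)"
    using range by (intro sum_mono) (auto simp: \<chi>_def)
  finally have low: "(k - 1) + (k - 2) * J \<le> x k"
    using last by simp
  then have "\<chi> (x k) = 1" by (simp add: \<chi>_def)
  moreover have "(\<Sum>i=1..k. \<chi> (x i)) = J + \<chi> (x k)"
    using assms(2) by (cases k) (simp_all add: J_def)
  ultimately have "r \<le> J + 1" using dvd by (simp add: dvd_imp_le)
  then have "(k - 1) + (k - 2) * (r - 1) \<le> x k"
    using low mult_le_mono2[of "r - 1" J "k - 2"] by linarith
  moreover have "(k - 1) + (k - 2) * (r - 1) = r * k - 2 * r + 1"
  proof -
    obtain a b where "k = a + 2" "r = b + 1"
      using assms(1,2) le_Suc_ex by (metis Suc_eq_plus1 Suc_pred add.commute)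
    then show ?thesis by (simp add: algebra_simps)
  qed
  moreover have "x k \<le> t" using range assms(2) by auto
  ultimately show ?thesis by linarith
qed

theorem theorem3:
  fixes k r :: nat
  assumes "0 < k" and "0 < r" and "r dvd k" and "k > r"
  shows "S_z2 k r = r * k - 2 * r + 1"
  unfolding S_z2_def
proof (rule Least_equality)
  show "0 < r * k - 2 * r + 1 \<and> zs_property k r (r * k - 2 * r + 1)"
    using zs_property_at_bound assms(2-4) by simp
next
  fix t
  assume "0 < t \<and> zs_property k r t"
  then have "has_zero_sum_solution k r t (\<lambda>n. if k - 1 \<le> n then 1 else 0)"
    unfolding zs_property_iff by simp
  then show "r * k - 2 * r + 1 \<le> t"
    using threshold_coloring_forces_bound assms(2,4) by simp
qed

end
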